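(* Let $\mathcal{X}=\mathbb{R}_{>0}^3$, $\mathcal{Y}=\mathbb{R}_{>0}$, $\mathcal{U}=\mathbb{R}_{>0}$, and consider $x^+=f(x,u)$, $y=h(x)$ with $f(x,u)=\big(x_1x_2x_3,\ x_3/x_1,\ \sqrt{x_1x_2u}\big)^T$ and $h(x)=x_1$. Then (i) for every $x\in\mathcal{X}$, $[x]_2=\{x\}$; and (ii) the system $$\hat x^+=\big(\hat x_2\hat x_3 y,\ \hat x_3/\hat x_1,\ \sqrt{\hat x_1\hat x_2 u}\big)^T$$ is a deadbeat observer for this system.
   Context: $h^{-1}(y):=\{\eta\in\mathcal{X}:h(\eta)=y\}$; $f(S,u):=\{f(s,u):s\in S\}$; $[S]_k:=\bigcup_{s\in S}[s]_k$. Define $[x]_0:=h^{-1}(h(x))$, and for $k\ge0$: $[x]_k^+:=\bigcup_{(\eta,u)\in\mathcal{X}\times\mathcal{U}:f(\eta,u)=x} f([\eta]_k,u)$, $[x]_{k+1}:=[x]_k^+\cap[x]_0$. For an input sequence $\mathbf{u}=(u_0,u_1,\ldots)$, $\phi(0,x,\mathbf{u})=x$, $\phi(k+1,x,\mathbf{u})=f(\phi(k,x,\mathbf{u}),u_k)$. For an observer $\hat x^+=g(\hat x,y,u)$, the coupled solution is $\psi(0,\hat x,x,\mathbf{u})=\hat x$, $\psi(k+1,\hat x,x,\mathbf{u})=g(\psi(k,\hat x,x,\mathbf{u}),h(\phi(k,x,\mathbf{u})),u_k)$; it is a deadbeat observer if there is $p\ge1$ with $\psi(k,\hat x,x,\mathbf{u})=\phi(k,x,\mathbf{u})$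 for all $x,\hat x\in\mathcal{X}$, all input sequences $\mathbf{u}$ with values in $\mathcal{U}$, and all $k\ge p$. *)

theory Defs
  imports Complex_Main
begin

fun cls :: "'x set \<Rightarrow> 'u set \<Rightarrow> ('x \<Rightarrow> 'u \<Rightarrow> 'x) \<Rightarrow> ('x \<Rightarrow> 'y) \<Rightarrow> nat \<Rightarrow> 'x \<Rightarrow> 'x set" where
  "cls X U f h 0 x = {\<eta> \<in> X. h \<eta> = h x}"
| "cls X U f h (Suc k) x =
     (\<Union>{(\<lambda>s. f s u) ` cls X U f h k \<eta> | \<eta> u. \<eta> \<in> X \<and> u \<in> U \<and> f \<eta> u = x})
     \<inter> cls X U f h 0 x"

fun phi :: "('x \<Rightarrow> 'u \<Rightarrow> 'x) \<Rightarrow> nat \<Rightarrow> 'x \<Rightarrow> (nat \<Rightarrow> 'u) \<Rightarrow> 'x" where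
  "phi f 0 x us = x"
| "phi f (Suc k) x us = f (phi f k x us) (us k)"

fun psi :: "('x \<Rightarrow> 'u \<Rightarrow> 'x) \<Rightarrow> ('x \<Rightarrow> 'y) \<Rightarrow> ('z \<Rightarrow> 'y \<Rightarrow> 'u \<Rightarrow> 'z)
            \<Rightarrow> nat \<Rightarrow> 'z \<Rightarrow> 'x \<Rightarrow> (nat \<Rightarrow> 'u) \<Rightarrow> 'z" where
  "psi f h g 0 xh x us = xh"
| "psi f h g (Suc k) xh x us = g (psi f h g k xh x us) (h (phi f k x us)) (us k)"

definition deadbeat :: "'x set \<Rightarrow> 'u set \<Rightarrow> ('x \<Rightarrow> 'u \<Rightarrow> 'x) \<Rightarrow> ('x \<Rightarrow> 'y)
                        \<Rightarrow> ('x \<Rightarrow> 'y \<Rightarrow> 'u \<Rightarrow> 'x) \<Rightarrow> bool" where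
  "deadbeat X U f h g \<longleftrightarrow>
     (\<exists>p\<ge>1. \<forall>x\<in>X. \<forall>xh\<in>X. \<forall>us. (\<forall>k. us k \<in> U) \<longrightarrow>
        (\<forall>k\<ge>p. psi f h g k xh x us = phi f k x us))"

definition Xex :: "(real \<times> real \<times> real) set" where
  "Xex = {(a, b, c). a > 0 \<and> b > 0 \<and> c > 0}"

definition Uex :: "real set" where
  "Uex = {u. u > 0}"

definition fex :: "real \<times> real \<times> real \<Rightarrow> real \<Rightarrow> real \<times> real \<times> real" where
  "fex x u = (case x of (x1, x2, x3) \<Rightarrow> (x1 * x2 * x3, x3 / x1, sqrt (x1 * x2 * u)))"

definition hex :: "real \<times> real \<times> real \<Rightarrow> real" where
  "hex x = fst x"

definition gex :: "real \<times> real \<times> real \<Rightarrow> real \<Rightarrow> real \<Rightarrow> real \<times> real \<times> real" where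
  "gex xh y u = (case xh of (a, b, c) \<Rightarrow> (b * c * y, c / a, sqrt (a * b * u)))"

end

theory Submission
  imports Defs
begin

(*
  Proof strategy.
  Part (i) is an observability statement, part (ii) a convergence statement; both become
  transparent in logarithmic coordinates, where the multiplicative dynamics turn linear.

  For the example, every positive state has a predecessor, and the output sequence over
  two steps determines the state (a linear computation on the logarithms).  Finally the
  componentwise log-ratio between observer and plant evolves by the linear map
  (e1,e2,e3) |-> (e2+e3, e3-e1, (e1+e2)/2), whose cube is zero; hence the observer
  coincides with the plant after three steps.
*)

lemma cls_refl:
  assumes pred: "\<And>x. x \<in> X \<Longrightarrow> \<exists>\<eta>\<in>X. \<exists>u\<in>U. f \<eta> u = x"
    and x: "x \<in> X"
  shows "x \<in> cls X U f h k x"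
  using x
proof (induction k arbitrary: x)
  case 0
  then show ?case by simp
next
  case (Suc k)
  obtain \<eta> u where \<eta>: "\<eta> \<in> X" and u: "u \<in> U" and f\<eta>: "f \<eta> u = x"
    using pred[OF Suc.prems] by blast
  have "x \<in> (\<lambda>s. f s u) ` cls X U f h k \<eta>"
    using Suc.IH[OF \<eta>] f\<eta> by blast
  then show ?case
    using \<eta> u f\<eta> Suc.prems by auto
qed

lemma cls2_elim:
  assumes "z \<in> cls X U f h 2 x"
  obtains \<zeta> r u v where "\<zeta> \<in> X" "r \<in> X" "u \<in> U" "v \<in> U"
    "h r = h \<zeta>" "h (f r v) = h (f \<zeta> v)" "h (f (f r v) u) = h (f (f \<zeta> v) u)"
    "x = f (f \<zeta> v) u" "z = f (f r v) u"
proof -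
  have "z \<in> \<Union>{(\<lambda>s. f s u) ` cls X U f h (Suc 0) \<eta> | \<eta> u. \<eta> \<in> X \<and> u \<in> U \<and> f \<eta> u = x}
      \<inter> cls X U f h 0 x"
    using assms by (simp only: numeral_2_eq_2 cls.simps(2)[of _ _ _ _ "Suc 0"])
  then obtain \<eta> u s where "\<eta> \<in> X" "u \<in> U" "f \<eta> u = x" "s \<in> cls X U f h (Suc 0) \<eta>"
    "z = f s u" "h z = h x"
    by (auto simp del: cls.simps(2))
  moreover from \<open>s \<in> cls X U f h (Suc 0) \<eta>\<close> obtain \<zeta> v r where "\<zeta> \<in> X" "v \<in> U"
    "f \<zeta> v = \<eta>" "r \<in> X" "h r = h \<zeta>" "s = f r v" "h s = h \<eta>"
    by auto
  ultimately show ?thesis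
    using that by simp
qed

lemma cls2_singleton:
  assumes pred: "\<And>x. x \<in> X \<Longrightarrow> \<exists>\<eta>\<in>X. \<exists>u\<in>U. f \<eta> u = x"
    and observable: "\<And>r \<zeta> u v. r \<in> X \<Longrightarrow> \<zeta> \<in> X \<Longrightarrow> u \<in> U \<Longrightarrow> v \<in> U \<Longrightarrow>
      h r = h \<zeta> \<Longrightarrow> h (f r v) = h (f \<zeta> v) \<Longrightarrow> h (f (f r v) u) = h (f (f \<zeta> v) u) \<Longrightarrow> r = \<zeta>"
    and x: "x \<in> X"
  shows "cls X U f h 2 x = {x}"
proof
  show "cls X U f h 2 x \<subseteq> {x}"
  proof
    fix z
    assume "z \<in> cls X U f h 2 x"
    then show "z \<in> {x}"
      by (rule cls2_elim) (use observable in auto)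
  qed
  show "{x} \<subseteq> cls X U f h 2 x"
    using cls_refl[OF pred x] by blast
qed

lemma deadbeat_if_synchronised:
  assumes p: "p \<ge> 1"
    and consistent: "\<And>x u. g x (h x) u = f x u"
    and sync: "\<And>x xh us. x \<in> X \<Longrightarrow> xh \<in> X \<Longrightarrow> \<forall>k::nat. us k \<in> U \<Longrightarrow>
      psi f h g p xh x us = phi f p x us"
  shows "deadbeat X U f h g"
  unfolding deadbeat_def
proof (intro exI[of _ p] conjI ballI allI impI)
  fix x xh k and us :: "nat \<Rightarrow> _"
  assume "x \<in> X" "xh \<in> X" "\<forall>k. us k \<in> U" "p \<le> k"
  from \<open>p \<le> k\<close> show "psi f h g k xh x us = phi f k x us"
  proof (induction k rule: dec_induct)
    case base
    show ?case using sync \<open>x \<in> X\<close> \<open>xh \<in> X\<close> \<open>\<forall>k. us k \<in> U\<close> .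
  next
    case (step n)
    then show ?case by (simp add: consistent)
  qed
qed (rule p)

lemma phi_in:
  assumes "\<And>x u. x \<in> X \<Longrightarrow> u \<in> U \<Longrightarrow> f x u \<in> X" "x \<in> X" "\<forall>k. us k \<in> U"
  shows "phi f k x us \<in> X"
  using assms by (induction k) auto

lemma psi_in:
  assumes "\<And>x u. x \<in> X \<Longrightarrow> u \<in> U \<Longrightarrow> f x u \<in> X"
    and "\<And>xh x u. xh \<in> X \<Longrightarrow> x \<in> X \<Longrightarrow> u \<in> U \<Longrightarrow> g xh (h x) u \<in> X"
    and "x \<in> X" "xh \<in> X" "\<forall>k. us k \<in> U"
  shows "psi f h g k xh x us \<in> X"
proof (induction k)
  case 0
  show ?case using assms(4) by simp
next
  case (Suc k)
  have "phi f k x us \<in> X"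
    by (rule phi_in[OF assms(1,3,5)])
  then show ?case
    using Suc.IH assms(2,5) by simp
qed

text \<open>The positive orthant is invariant under plant and observer, so all trajectories
  stay where logarithms are available.\<close>

lemma fex_in_Xex: "x \<in> Xex \<Longrightarrow> u \<in> Uex \<Longrightarrow> fex x u \<in> Xex"
  by (auto simp: Xex_def Uex_def fex_def)

lemma gex_in_Xex: "xh \<in> Xex \<Longrightarrow> x \<in> Xex \<Longrightarrow> u \<in> Uex \<Longrightarrow> gex xh (hex x) u \<in> Xex"
  by (auto simp: Xex_def Uex_def gex_def hex_def)

lemma ex_trajectories_in_Xex:
  assumes "x \<in> Xex" "xh \<in> Xex" "\<forall>k. us k \<in> Uex"
  shows "phi fex k x us \<in> Xex" "psi fex hex gex k xh x us \<in> Xex"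
proof -
  show "phi fex k x us \<in> Xex"
    using fex_in_Xex assms(1,3) by (rule phi_in)
  show "psi fex hex gex k xh x us \<in> Xex"
    using fex_in_Xex gex_in_Xex assms by (rule psi_in)
qed

lemma gex_hex: "gex x (hex x) u = fex x u"
  by (cases x) (simp add: gex_def fex_def hex_def)

lemma fex_predecessor:
  assumes "x \<in> Xex"
  shows "\<exists>\<eta>\<in>Xex. \<exists>u\<in>Uex. fex \<eta> u = x"
proof -
  obtain a b c where x: "x = (a, b, c)" and pos: "a > 0" "b > 0" "c > 0"
    using assms by (auto simp: Xex_def)
  have "1 * (a / b) * (c\<^sup>2 * b / a) = c\<^sup>2"
    using pos by (simp add: field_simps power2_eq_square)
  then have "fex (1, a / b, b) (c\<^sup>2 * b / a) = x"
    using pos by (simp add: fex_def x)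
  moreover have "(1, a / b, b) \<in> Xex" "c\<^sup>2 * b / a \<in> Uex"
    using pos by (auto simp: Xex_def Uex_def)
  ultimately show ?thesis by blast
qed

text \<open>In logarithms the three output equalities
  read d1 = 0, d1 + d2 + d3 = 0 and d2 + 2 d3 + (d1 + d2)/2 = 0 for the log-difference d
  of the two states, which forces d = 0.\<close>

lemma ex_observable:
  assumes "r \<in> Xex" "\<zeta> \<in> Xex" "u \<in> Uex" "v \<in> Uex"
    and out0: "hex r = hex \<zeta>"
    and out1: "hex (fex r v) = hex (fex \<zeta> v)"
    and out2: "hex (fex (fex r v) u) = hex (fex (fex \<zeta> v) u)"
  shows "r = \<zeta>"
proof -
  obtain r1 r2 r3 z1 z2 z3 where r: "r = (r1, r2, r3)" and \<zeta>: "\<zeta> = (z1, z2, z3)"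
    by (cases r, cases \<zeta>)
  have pos: "r1 > 0" "r2 > 0" "r3 > 0" "z1 > 0" "z2 > 0" "z3 > 0" "v > 0"
    using assms(1,2,4) by (auto simp: Xex_def Uex_def r \<zeta>)
  have l0: "ln r1 = ln z1"
    using out0 by (simp add: r \<zeta> hex_def)
  have l1: "ln r1 + ln r2 + ln r3 = ln z1 + ln z2 + ln z3"
    using arg_cong[OF out1, of ln] pos by (simp add: r \<zeta> hex_def fex_def ln_mult)
  have "ln (r1 * r2 * r3 * (r3 / r1) * sqrt (r1 * r2 * v))
      = ln (z1 * z2 * z3 * (z3 / z1) * sqrt (z1 * z2 * v))"
    using out2 by (simp add: r \<zeta> hex_def fex_def)
  then have l2: "ln r2 + 2 * ln r3 + (ln r1 + ln r2 + ln v) / 2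
      = ln z2 + 2 * ln z3 + (ln z1 + ln z2 + ln v) / 2"
    using pos by (simp add: ln_mult ln_div ln_sqrt)
  have "ln r2 = ln z2"
    using l0 l1 l2 by argo
  moreover have "ln r3 = ln z3"
    using l0 l1 l2 by argo
  ultimately show ?thesis
    using l0 pos by (simp add: r \<zeta>)
qed

definition logerr :: "real \<times> real \<times> real \<Rightarrow> real \<times> real \<times> real \<Rightarrow> real \<times> real \<times> real" where
  "logerr xh x = (ln (fst xh) - ln (fst x), ln (fst (snd xh)) - ln (fst (snd x)),
                  ln (snd (snd xh)) - ln (snd (snd x)))"

text \<open>The linear map governing the log-ratio of observer and plant.\<close>

definition errmap :: "real \<times> real \<times> real \<Rightarrow> real \<times> real \<times> real" where
  "errmap e = (case e of (e1, e2, e3) \<Rightarrow> (e2 + e3, e3 - e1, (e1 + e2) / 2))"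

lemma errmap_nilpotent: "(errmap ^^ 3) e = (0, 0, 0)"
  by (cases e) (simp add: errmap_def numeral_3_eq_3 field_simps)

lemma logerr_zero: "xh \<in> Xex \<Longrightarrow> x \<in> Xex \<Longrightarrow> logerr xh x = (0, 0, 0) \<Longrightarrow> xh = x"
  by (auto simp: Xex_def logerr_def)

text \<open>One step of observer and plant maps the log-ratio by errmap; the inputs cancel.\<close>

lemma logerr_step:
  assumes "xh \<in> Xex" "x \<in> Xex" "u \<in> Uex"
  shows "logerr (gex xh (hex x) u) (fex x u) = errmap (logerr xh x)"
proof -
  obtain a b c a' b' c' where xh: "xh = (a, b, c)" and x: "x = (a', b', c')"
    and pos: "a > 0" "b > 0" "c > 0" "a' > 0" "b' > 0" "c' > 0"
    using assms(1,2) by (auto simp: Xex_def)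
  have "u > 0" using assms(3) by (simp add: Uex_def)
  with pos show ?thesis
    by (simp add: xh x logerr_def errmap_def gex_def fex_def hex_def ln_mult ln_div ln_sqrt
        add_divide_distrib diff_divide_distrib)
qed

lemma logerr_trajectory:
  assumes "x \<in> Xex" "xh \<in> Xex" "\<forall>k. us k \<in> Uex"
  shows "logerr (psi fex hex gex k xh x us) (phi fex k x us) = (errmap ^^ k) (logerr xh x)"
proof (induction k)
  case 0
  then show ?case by simp
next
  case (Suc k)
  have "logerr (psi fex hex gex (Suc k) xh x us) (phi fex (Suc k) x us)
      = errmap (logerr (psi fex hex gex k xh x us) (phi fex k x us))"
    using ex_trajectories_in_Xex[OF assms] assms(3) by (simp only: psi.simps phi.simps logerr_step)
  then show ?case
    using Suc.IH by simp
qed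

lemma ex_sync3:
  assumes "x \<in> Xex" "xh \<in> Xex" "\<forall>k. us k \<in> Uex"
  shows "psi fex hex gex 3 xh x us = phi fex 3 x us"
proof (rule logerr_zero)
  show "psi fex hex gex 3 xh x us \<in> Xex" "phi fex 3 x us \<in> Xex"
    using ex_trajectories_in_Xex[OF assms] by simp_all
  show "logerr (psi fex hex gex 3 xh x us) (phi fex 3 x us) = (0, 0, 0)"
    by (simp only: logerr_trajectory[OF assms] errmap_nilpotent)
qed

theorem mainTheorem9:
  shows "(\<forall>x\<in>Xex. cls Xex Uex fex hex 2 x = {x}) \<and> deadbeat Xex Uex fex hex gex"
proof
  show "\<forall>x\<in>Xex. cls Xex Uex fex hex 2 x = {x}"
  proof
    fix x
    assume "x \<in> Xex"
    with fex_predecessor ex_observable show "cls Xex Uex fex hex 2 x = {x}"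
      by (rule cls2_singleton)
  qed
  show "deadbeat Xex Uex fex hex gex"
  proof (rule deadbeat_if_synchronised)
    show "(3::nat) \<ge> 1" by simp
  qed (fact gex_hex, fact ex_sync3)
qed

end
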